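(* Let $k$ be a natural number, let $(X,\Sigma)$ be a measurable space, and let $\mu,\nu$ be finite measures on $(X,\Sigma)$ with $\mu$ absolutely continuous with respect to $\nu$; let $f\colon X\to[0,\infty)$ be a (measurable) Radon–Nikodym derivative $f=\frac{d\mu}{d\nu}$. Assume that one of the following holds: (I) $G=\mathbb{R}$ and $\nu$ is non-atomic; or (II) $G=\mathbb{Z}$, $X$ is finite, $\Sigma=2^X$, and $\nu$ is the counting measure. Let $q=(q_1,\dots,q_k)\in(G\cap[0,\infty))^k$ satisfy $q_1+\dots+q_k=\nu(X)$. Then there exists a partition $Q=(B_1,\dots,B_k)\in\mathcal{P}_{\nu,q}$ such that for all $i,j\in[k]$ with $i<j$, $$\sup_{B_i}f\le\inf_{B_j}f,$$ with the conventions $\sup\emptyset=-\infty$ and $\inf\emptyset=\infty$.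
   Context: $[k]:=\{1,\dots,k\}$. $\mathcal{P}_k$ denotes the set of all ordered partitions $P=(A_1,\dots,A_k)$ of $X$ with $A_i\in\Sigma$ for all $i$ (i.e. the $A_i$ are pairwise disjoint measurable sets, possibly empty, whose union is $X$). $\mathcal{P}_{\nu,q}:=\{P=(A_1,\dots,A_k)\in\mathcal{P}_k:\ \nu(A_i)=q_i\ \text{for all } i\in[k]\}$. *)

theory Defs
  imports "HOL-Analysis.Analysis"
begin

definition nonatomic :: "'a measure \<Rightarrow> bool" where
  "nonatomic M \<longleftrightarrow>
     (\<forall>A\<in>sets M. 0 < emeasure M A \<longrightarrow>
        (\<exists>B\<in>sets M. B \<subseteq> A \<and> 0 < emeasure M B \<and> emeasure M B < emeasure M A))"

definition partitions_nu_q :: "'a measure \<Rightarrow> nat \<Rightarrow> (nat \<Rightarrow> real) \<Rightarrow> (nat \<Rightarrow> 'a set) set" where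
  "partitions_nu_q M k q =
     {B. (\<forall>i\<in>{1..k}. B i \<in> sets M) \<and>
         (\<forall>i\<in>{1..k}. \<forall>j\<in>{1..k}. i \<noteq> j \<longrightarrow> B i \<inter> B j = {}) \<and>
         (\<Union>i\<in>{1..k}. B i) = space M \<and>
         (\<forall>i\<in>{1..k}. measure M (B i) = q i)}"

end

theory Submission
  imports Defs "HOL-Probability.Distribution_Functions"
begin

(* If S has measure at least t, a quantile c of f on S splits S into {f < c}, of measure at most t,
  and the level set {f = c}, which makes up the difference. Cutting a piece of the right size out
  of the level set yields a subset of measure exactly t on which f lies below its values on the
  rest of S. Such a piece exists whenever the missing mass lies in the value group G of the measure:
  for nonatomic measures this is Sierpinski's theorem, for the counting measure it is counting.
  Splitting off the lower part of measure q_1 + ... + q_(k-1) leaves the top block B_k, and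
  recursing on the lower part gives the partition. *)

lemma (in finite_measure) nonatomic_exists_subset_le_half:
  assumes "nonatomic M" "A \<in> sets M" "0 < measure M A"
  shows "\<exists>B\<in>sets M. B \<subseteq> A \<and> 0 < measure M B \<and> measure M B \<le> measure M A / 2"
proof -
  obtain B where B: "B \<in> sets M" "B \<subseteq> A" "0 < measure M B" "measure M B < measure M A"
    using assms unfolding nonatomic_def by (auto simp: emeasure_eq_measure ennreal_less_iff)
  show ?thesis
  proof (cases "measure M B \<le> measure M A / 2")
    case True
    then show ?thesis using B by blast
  next
    case False
    have "measure M (A - B) = measure M A - measure M B"
      using B assms(2) by (simp add: finite_measure_Diff)
    then show ?thesis
      using B assms(2) False by (intro bexI[of _ "A - B"]) auto
  qed
qed

lemma (in finite_measure) nonatomic_exists_small_subset: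
  assumes "nonatomic M" "A \<in> sets M" "0 < measure M A" "0 < e"
  shows "\<exists>B\<in>sets M. B \<subseteq> A \<and> 0 < measure M B \<and> measure M B < e"
proof -
  define P where "P = {measure M B |B. B \<in> sets M \<and> B \<subseteq> A \<and> 0 < measure M B}"
  have "measure M A \<in> P"
    using assms by (auto simp: P_def)
  have "bdd_below P"
    by (rule bdd_belowI[of _ 0]) (auto simp: P_def)
  have "Inf P \<le> 0"
  proof (rule ccontr)
    assume "\<not> Inf P \<le> 0"
    then obtain p where "p \<in> P" "p < 2 * Inf P"
      using cInf_lessD[of P "2 * Inf P"] \<open>measure M A \<in> P\<close> by force
    then obtain B where "B \<in> sets M" "B \<subseteq> A" "0 < measure M B" "measure M B < 2 * Inf P"
      by (auto simp: P_def)
    then obtain B' where "B' \<in> sets M" "B' \<subseteq> A" "0 < measure M B'" "measure M B' < Inf P"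
      using nonatomic_exists_subset_le_half[OF assms(1), of B] by force
    then show False
      using cInf_lower[OF _ \<open>bdd_below P\<close>, of "measure M B'"] by (auto simp: P_def)
  qed
  then obtain p where "p \<in> P" "p < e"
    using cInf_lessD[of P e] \<open>measure M A \<in> P\<close> assms(4) by force
  then show ?thesis
    by (auto simp: P_def)
qed

lemma exists_ge_half_Sup:
  fixes X :: "real set"
  assumes "0 \<in> X"
  shows "\<exists>x\<in>X. Sup X / 2 \<le> x"
proof (cases "Sup X \<le> 0")
  case True
  then show ?thesis
    using assms by (intro bexI[of _ 0]) auto
next
  case False
  then have "Sup X / 2 < Sup X"
    by simp
  then obtain x where "x \<in> X" "Sup X / 2 < x"
    using less_cSupE assms by blast
  then show ?thesis
    by force
qed

(* Greedy exhaustion: each step adds a piece of at least half the largest admissible measure.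
  The added measures tend to 0, so in the limit no piece of positive measure remains admissible. *)
lemma (in finite_measure) exists_saturated_subset:
  assumes r: "0 \<le> r"
  shows "\<exists>C\<in>sets M. C \<subseteq> E \<and> measure M C \<le> r \<and>
    (\<forall>D\<in>sets M. D \<subseteq> E - C \<longrightarrow> measure M D \<le> r - measure M C \<longrightarrow> measure M D = 0)"
proof -
  define cand where "cand C = {D \<in> sets M. D \<subseteq> E - C \<and> measure M D \<le> r - measure M C}" for C
  have "\<exists>D\<in>cand C. Sup (measure M ` cand C) / 2 \<le> measure M D" if "measure M C \<le> r" for C
  proof -
    have "0 \<in> measure M ` cand C"
      using that by (force simp: cand_def)
    then show ?thesis
      using exists_ge_half_Sup[of "measure M ` cand C"] by auto
  qed
  then obtain nxt where nxt: "\<And>C. measure M C \<le> r \<Longrightarrow>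
      nxt C \<in> cand C \<and> Sup (measure M ` cand C) / 2 \<le> measure M (nxt C)"
    by metis
  define Cs where "Cs n = ((\<lambda>C. C \<union> nxt C) ^^ n) {}" for n
  have Cs_Suc: "Cs (Suc n) = Cs n \<union> nxt (Cs n)" for n
    by (simp add: Cs_def)
  have Cs: "Cs n \<in> sets M \<and> Cs n \<subseteq> E \<and> measure M (Cs n) \<le> r" for n
  proof (induction n)
    case 0
    then show ?case using r by (simp add: Cs_def)
  next
    case (Suc n)
    then have "nxt (Cs n) \<in> cand (Cs n)"
      using nxt by blast
    moreover from this have "measure M (Cs (Suc n)) = measure M (Cs n) + measure M (nxt (Cs n))"
      using Suc unfolding Cs_Suc by (intro finite_measure_Union) (auto simp: cand_def)
    ultimately show ?case
      using Suc by (auto simp: Cs_Suc cand_def)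
  qed
  have Cs_step: "measure M (nxt (Cs n)) = measure M (Cs (Suc n)) - measure M (Cs n)" for n
    using nxt[of "Cs n"] Cs[of n] unfolding Cs_Suc
    by (subst finite_measure_Union) (auto simp: cand_def)
  define C where "C = (\<Union>n. Cs n)"
  have C: "C \<in> sets M" "C \<subseteq> E"
    using Cs by (auto simp: C_def)
  have lim: "(\<lambda>n. measure M (Cs n)) \<longlonglongrightarrow> measure M C"
    unfolding C_def using Cs by (intro finite_Lim_measure_incseq) (auto intro: incseq_SucI simp: Cs_Suc)
  have "measure M C \<le> r"
    using lim Cs by (intro LIMSEQ_le_const2) auto
  moreover have "measure M D = 0"
    if D: "D \<in> sets M" "D \<subseteq> E - C" "measure M D \<le> r - measure M C" for D
  proof -
    have "measure M D / 2 \<le> measure M (nxt (Cs n))" for n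
    proof -
      have "measure M (Cs n) \<le> measure M C"
        using C by (intro finite_measure_mono) (auto simp: C_def)
      then have "D \<in> cand (Cs n)"
        using D by (auto simp: cand_def C_def)
      then have "measure M D \<le> Sup (measure M ` cand (Cs n))"
        by (intro cSup_upper bdd_aboveI[of _ "measure M (space M)"]) (auto simp: cand_def bounded_measure)
      then show ?thesis
        using nxt[of "Cs n"] Cs[of n] by linarith
    qed
    moreover have "(\<lambda>n. measure M (nxt (Cs n))) \<longlonglongrightarrow> 0"
      unfolding Cs_step using tendsto_diff[OF LIMSEQ_Suc[OF lim] lim] by simp
    ultimately have "measure M D / 2 \<le> 0"
      by (intro LIMSEQ_le_const) auto
    then show ?thesis
      using measure_nonneg[of M D] by linarith
  qed
  ultimately show ?thesis
    using C by blast
qed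

lemma (in finite_measure) nonatomic_exists_subset_measure:
  assumes na: "nonatomic M" and E: "E \<in> sets M" and r: "0 \<le> r" "r \<le> measure M E"
  shows "\<exists>C\<in>sets M. C \<subseteq> E \<and> measure M C = r"
proof -
  obtain C where C: "C \<in> sets M" "C \<subseteq> E" "measure M C \<le> r" and saturated:
      "\<forall>D\<in>sets M. D \<subseteq> E - C \<longrightarrow> measure M D \<le> r - measure M C \<longrightarrow> measure M D = 0"
    using exists_saturated_subset[OF r(1), of E] by blast
  have "\<not> measure M C < r"
  proof
    assume "measure M C < r"
    moreover have "measure M (E - C) = measure M E - measure M C"
      using C E by (simp add: finite_measure_Diff)
    ultimately obtain D where D: "D \<in> sets M" "D \<subseteq> E - C" "0 < measure M D" "measure M D < r - measure M C"
      using nonatomic_exists_small_subset[OF na, of "E - C" "r - measure M C"] C E r by auto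
    then have "measure M D = 0"
      using saturated less_imp_le[OF D(4)] by blast
    then show False
      using D(3) by simp
  qed
  then have "measure M C = r"
    using C(3) by linarith
  then show ?thesis
    using C by blast
qed

lemma (in finite_borel_measure) exists_quantile:
  assumes "0 < t" "t < measure M (space M)"
  shows "\<exists>c. measure M {..<c} \<le> t \<and> t \<le> cdf M c"
proof -
  define A where "A = {c. t \<le> cdf M c}"
  have "\<forall>\<^sub>F x in at_top. t < cdf M x"
    using cdf_lim_at_top assms(2) by (rule order_tendstoD)
  then obtain a where "a \<in> A"
    unfolding A_def eventually_at_top_linorder by (meson dual_order.refl less_imp_le mem_Collect_eq)
  have "\<forall>\<^sub>F x in at_bot. cdf M x < t"
    using cdf_lim_at_bot assms(1) by (rule order_tendstoD)
  then obtain b where b: "\<And>x. x \<le> b \<Longrightarrow> cdf M x < t"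
    unfolding eventually_at_bot_linorder by blast
  have "bdd_below A"
  proof (rule bdd_belowI)
    fix x assume "x \<in> A"
    then show "b \<le> x" using b[of x] by (force simp: A_def)
  qed
  define c where "c = Inf A"
  have "t \<le> cdf M c"
  proof (rule tendsto_lowerbound)
    show "(cdf M \<longlongrightarrow> cdf M c) (at_right c)"
      using cdf_is_right_cont by (simp add: continuous_within)
    show "\<forall>\<^sub>F x in at_right c. t \<le> cdf M x"
      using eventually_at_right_real[of c "c + 1"]
    proof (rule eventually_mono)
      fix x assume "x \<in> {c<..<c + 1}"
      then have "Inf A < x"
        by (simp add: c_def)
      then obtain a' where "a' \<in> A" "a' < x"
        using cInf_lessD[of A x] \<open>a \<in> A\<close> by blast
      then show "t \<le> cdf M x"
        using cdf_nondecreasing[of a' x] by (simp add: A_def)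
    qed simp
  qed simp
  moreover have "measure M {..<c} \<le> t"
  proof (rule tendsto_upperbound)
    show "(cdf M \<longlongrightarrow> measure M {..<c}) (at_left c)"
      by (rule cdf_at_left)
    show "\<forall>\<^sub>F x in at_left c. cdf M x \<le> t"
      using eventually_at_left_real[of "c - 1" c]
    proof (rule eventually_mono)
      fix x assume "x \<in> {c - 1<..<c}"
      then have "x \<notin> A"
        using \<open>bdd_below A\<close> cInf_lower unfolding c_def by fastforce
      then show "cdf M x \<le> t" by (simp add: A_def)
    qed simp
  qed simp
  ultimately show ?thesis by blast
qed

lemma (in finite_measure) exists_quantile_level:
  fixes f :: "'a \<Rightarrow> real"
  assumes S: "S \<in> sets M" and f: "f \<in> borel_measurable M"
    and t: "0 < t" "t < measure M S"
  shows "\<exists>c. measure M {x\<in>S. f x < c} \<le> t \<and> t \<le> measure M {x\<in>S. f x \<le> c}"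
proof -
  let ?N = "distr (restrict_space M S) borel f"
  have f_S: "f \<in> borel_measurable (restrict_space M S)"
    using f by (rule measurable_restrict_space1)
  have "finite_measure ?N"
    using finite_measure_restrict_space[OF finite_measure_axioms S] f_S
    by (rule finite_measure.finite_measure_distr)
  then interpret N: finite_borel_measure ?N
    by (intro finite_borel_measure.intro finite_borel_measure_axioms.intro) simp_all
  have N_eq: "measure ?N A = measure M {x\<in>S. f x \<in> A}" if "A \<in> sets borel" for A
  proof -
    have "f -` A \<inter> space (restrict_space M S) = {x\<in>S. f x \<in> A}"
      using sets.sets_into_space[OF S] by (auto simp: space_restrict_space)
    then show ?thesis
      using measure_distr[OF f_S that] S by (simp add: measure_restrict_space)
  qed
  have "measure ?N (space ?N) = measure M S"
    using N_eq[of UNIV] by simp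
  then obtain c where "measure ?N {..<c} \<le> t" "t \<le> cdf ?N c"
    using N.exists_quantile t by auto
  then show ?thesis
    using N_eq[of "{..<c}"] N_eq[of "{..c}"] by (auto simp: cdf_def)
qed

definition sorted_partition ::
    "'a measure \<Rightarrow> ('a \<Rightarrow> real) \<Rightarrow> 'a set \<Rightarrow> nat \<Rightarrow> (nat \<Rightarrow> real) \<Rightarrow> (nat \<Rightarrow> 'a set) \<Rightarrow> bool" where
  "sorted_partition M f S k q B \<longleftrightarrow>
     (\<forall>i\<in>{1..k}. B i \<in> sets M) \<and> disjoint_family_on B {1..k} \<and> (\<Union>i\<in>{1..k}. B i) = S \<and>
     (\<forall>i\<in>{1..k}. measure M (B i) = q i) \<and>
     (\<forall>i\<in>{1..k}. \<forall>j\<in>{1..k}. i < j \<longrightarrow> (\<forall>x\<in>B i. \<forall>y\<in>B j. f x \<le> f y))"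

lemma sorted_partition_fun_upd:
  assumes B: "sorted_partition M f L k q B"
    and L: "L \<subseteq> S" "S - L \<in> sets M" "measure M (S - L) = q (Suc k)"
    and L_below: "\<forall>x\<in>L. \<forall>y\<in>S - L. f x \<le> f y"
  shows "sorted_partition M f S (Suc k) q (B(Suc k := S - L))"
proof -
  let ?B' = "B(Suc k := S - L)"
  have idx: "{1..Suc k} = insert (Suc k) {1..k}"
    by auto
  have B_old: "?B' i = B i" and B_L: "B i \<subseteq> L" if "i \<in> {1..k}" for i
    using B that by (auto simp: sorted_partition_def)
  have "\<forall>i\<in>{1..Suc k}. ?B' i \<in> sets M"
    unfolding idx using B L(2) by (auto simp: sorted_partition_def)
  moreover have "disjoint_family_on ?B' {1..Suc k}"
    unfolding idx using B B_L by (fastforce simp: sorted_partition_def disjoint_family_on_def)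
  moreover have "(\<Union>i\<in>{1..Suc k}. ?B' i) = S"
    unfolding idx using B L(1) by (auto simp: sorted_partition_def)
  moreover have "\<forall>i\<in>{1..Suc k}. measure M (?B' i) = q i"
    unfolding idx using B L(3) by (simp add: sorted_partition_def)
  moreover have "f x \<le> f y"
    if "i \<in> {1..Suc k}" "j \<in> {1..Suc k}" "i < j" "x \<in> ?B' i" "y \<in> ?B' j" for i j x y
  proof (cases "j = Suc k")
    case True
    then have "i \<in> {1..k}"
      using that by auto
    then have "x \<in> L"
      using that(4) B_L B_old by blast
    moreover have "y \<in> S - L"
      using that(5) True by simp
    ultimately show ?thesis
      using L_below by blast
  next
    case False
    then have "i \<in> {1..k}" "j \<in> {1..k}"
      using that by auto
    moreover from this have "x \<in> B i" "y \<in> B j"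
      using that B_old by auto
    ultimately show ?thesis
      using B \<open>i < j\<close> unfolding sorted_partition_def by blast
  qed
  ultimately show ?thesis
    unfolding sorted_partition_def by blast
qed

lemma sorted_partition_in_partitions_nu_q:
  "sorted_partition M f (space M) k q B \<Longrightarrow> B \<in> partitions_nu_q M k q"
  unfolding sorted_partition_def partitions_nu_q_def disjoint_family_on_def by blast

lemma sorted_partition_SUP_le_INF:
  assumes "sorted_partition M f S k q B" "i \<in> {1..k}" "j \<in> {1..k}" "i < j"
  shows "(SUP x\<in>B i. ereal (f x)) \<le> (INF x\<in>B j. ereal (f x))"
proof (intro SUP_least INF_greatest)
  fix x y assume "x \<in> B i" "y \<in> B j"
  then have "f x \<le> f y"
    using assms unfolding sorted_partition_def by blast
  then show "ereal (f x) \<le> ereal (f y)"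
    by simp
qed

(* G is the value group of the paper (the reals in case (I), the integers in case (II)). *)
locale divisible_finite_measure = finite_measure M for M :: "'a measure" +
  fixes G :: "real set"
  assumes measure_in_G: "A \<in> sets M \<Longrightarrow> measure M A \<in> G"
    and diff_in_G: "a \<in> G \<Longrightarrow> b \<in> G \<Longrightarrow> a - b \<in> G"
    and exists_subset_with_measure:
      "E \<in> sets M \<Longrightarrow> r \<in> G \<Longrightarrow> 0 \<le> r \<Longrightarrow> r \<le> measure M E \<Longrightarrow>
        \<exists>C\<in>sets M. C \<subseteq> E \<and> measure M C = r"
begin

lemma exists_sublevel_subset:
  fixes f :: "'a \<Rightarrow> real"
  assumes S: "S \<in> sets M" and f: "f \<in> borel_measurable M"
    and t: "t \<in> G" "0 \<le> t" "t \<le> measure M S"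
  shows "\<exists>B\<in>sets M. B \<subseteq> S \<and> measure M B = t \<and> (\<forall>x\<in>B. \<forall>y\<in>S - B. f x \<le> f y)"
proof -
  consider "t = 0" | "t = measure M S" | "0 < t" "t < measure M S"
    using t by linarith
  then show ?thesis
  proof cases
    case 1
    then show ?thesis by (intro bexI[of _ "{}"]) auto
  next
    case 2
    then show ?thesis using S by (intro bexI[of _ S]) auto
  next
    case 3
    then obtain c where c: "measure M {x\<in>S. f x < c} \<le> t" "t \<le> measure M {x\<in>S. f x \<le> c}"
      using exists_quantile_level[OF S f] by blast
    define L where "L = {x\<in>S. f x < c}"
    define E where "E = {x\<in>S. f x = c}"
    have restrict: "{x\<in>S. P (f x)} = S \<inter> {x\<in>space M. P (f x)}" for P
      using sets.sets_into_space[OF S] by auto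
    have L: "L \<in> sets M" and E: "E \<in> sets M"
      unfolding L_def E_def restrict using S f by measurable
    have "{x\<in>S. f x \<le> c} = L \<union> E" "L \<inter> E = {}"
      by (auto simp: L_def E_def)
    then have "measure M {x\<in>S. f x \<le> c} = measure M L + measure M E"
      using L E by (simp add: finite_measure_Union)
    then obtain C where C: "C \<in> sets M" "C \<subseteq> E" "measure M C = t - measure M L"
      using exists_subset_with_measure[OF E, of "t - measure M L"] c L t(1)
      by (auto simp: L_def diff_in_G measure_in_G)
    have "measure M (L \<union> C) = t"
      using C L by (subst finite_measure_Union) (auto simp: L_def E_def)
    moreover have "f x \<le> f y" if "x \<in> L \<union> C" "y \<in> S - (L \<union> C)" for x y
      using that C(2) by (auto simp: L_def E_def)
    moreover have "L \<union> C \<subseteq> S"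
      using C(2) by (auto simp: L_def E_def)
    ultimately show ?thesis
      using L C(1) by blast
  qed
qed

lemma exists_sorted_partition:
  fixes f :: "'a \<Rightarrow> real" and q :: "nat \<Rightarrow> real"
  assumes "1 \<le> k" "S \<in> sets M" "f \<in> borel_measurable M"
    and "\<forall>i\<in>{1..k}. q i \<in> G \<and> 0 \<le> q i" "(\<Sum>i=1..k. q i) = measure M S"
  shows "\<exists>B. sorted_partition M f S k q B"
  using assms(1,2,4,5)
proof (induction k arbitrary: S rule: nat_induct_at_least)
  case base
  then show ?case
    by (intro exI[of _ "\<lambda>_. S"]) (auto simp: sorted_partition_def disjoint_family_on_def)
next
  case (Suc k)
  define T where "T = measure M S - q (Suc k)"
  have T: "T = (\<Sum>i=1..k. q i)"
    using Suc.prems(3) Suc.hyps by (simp add: T_def)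
  have q_Suc: "q (Suc k) \<in> G" "0 \<le> q (Suc k)"
    using Suc.prems(2) by auto
  have "T \<in> G" "T \<le> measure M S"
    using Suc.prems(1) q_Suc by (simp_all add: T_def diff_in_G measure_in_G)
  moreover have "0 \<le> T"
    unfolding T using Suc.prems(2) by (intro sum_nonneg) auto
  ultimately obtain L where L: "L \<in> sets M" "L \<subseteq> S" "measure M L = T"
      and L_below: "\<forall>x\<in>L. \<forall>y\<in>S - L. f x \<le> f y"
    using exists_sublevel_subset[OF Suc.prems(1) assms(3)] by blast
  obtain B where "sorted_partition M f L k q B"
    using Suc.IH[OF L(1)] Suc.prems(2) L(3) T by auto
  moreover have "measure M (S - L) = q (Suc k)"
    using L Suc.prems(1) by (simp add: finite_measure_Diff T_def)
  ultimately show ?case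
    using sorted_partition_fun_upd L Suc.prems(1) L_below by blast
qed

end

lemma divisible_finite_measure_nonatomic:
  assumes "finite_measure M" "nonatomic M"
  shows "divisible_finite_measure M UNIV"
  using assms finite_measure.nonatomic_exists_subset_measure
  by (intro divisible_finite_measure.intro divisible_finite_measure_axioms.intro) auto

lemma divisible_finite_measure_count_space:
  assumes "finite X"
  shows "divisible_finite_measure (count_space X) \<int>"
proof (intro divisible_finite_measure.intro divisible_finite_measure_axioms.intro)
  show "finite_measure (count_space X)"
    using assms by (rule finite_measure_count_space)
  show "measure (count_space X) A \<in> \<int>" for A
    by (simp add: Measure_Space.measure_count_space)
  show "a - b \<in> \<int>" if "a \<in> \<int>" "b \<in> \<int>" for a b :: real
    using that by (rule Ints_diff)
  fix E and r :: real
  assume "E \<in> sets (count_space X)" "r \<in> \<int>" "0 \<le> r" "r \<le> measure (count_space X) E"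
  moreover from this obtain z where "r = of_int z"
    by (auto elim: Ints_cases)
  with \<open>0 \<le> r\<close> obtain n :: nat where "r = n"
    by (metis of_int_0_le_iff of_nat_nat)
  ultimately obtain C where "C \<subseteq> E" "card C = n" "finite C"
    using obtain_subset_with_card_n[of n E] assms finite_subset[of E X] by auto
  then show "\<exists>C\<in>sets (count_space X). C \<subseteq> E \<and> measure (count_space X) C = r"
    using \<open>E \<in> sets (count_space X)\<close> \<open>r = n\<close> by (intro bexI[of _ C]) auto
qed

theorem proposition1:
  fixes k :: nat and \<mu> \<nu> :: "'a measure" and f :: "'a \<Rightarrow> real" and q :: "nat \<Rightarrow> real"
  assumes "k \<ge> 1"
    and "finite_measure \<mu>" and "finite_measure \<nu>"
    and "sets \<mu> = sets \<nu>"
    and "absolutely_continuous \<nu> \<mu>"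
    and "f \<in> borel_measurable \<nu>" and "\<forall>x\<in>space \<nu>. 0 \<le> f x"
    and "\<mu> = density \<nu> (\<lambda>x. ennreal (f x))"
    and "(nonatomic \<nu> \<and> (\<forall>i\<in>{1..k}. 0 \<le> q i))
         \<or> (finite (space \<nu>) \<and> \<nu> = count_space (space \<nu>) \<and>
            (\<forall>i\<in>{1..k}. q i \<in> \<int> \<and> 0 \<le> q i))"
    and "(\<Sum>i=1..k. q i) = measure \<nu> (space \<nu>)"
  shows "\<exists>B\<in>partitions_nu_q \<nu> k q.
           \<forall>i\<in>{1..k}. \<forall>j\<in>{1..k}. i < j \<longrightarrow>
             (SUP x\<in>B i. ereal (f x)) \<le> (INF x\<in>B j. ereal (f x))"
proof -
  from assms(9) obtain G
    where "divisible_finite_measure \<nu> G" and q_G: "\<forall>i\<in>{1..k}. q i \<in> G \<and> 0 \<le> q i"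
  proof
    assume "nonatomic \<nu> \<and> (\<forall>i\<in>{1..k}. 0 \<le> q i)"
    then show thesis
      using that[of UNIV] divisible_finite_measure_nonatomic[OF assms(3)] by blast
  next
    assume *: "finite (space \<nu>) \<and> \<nu> = count_space (space \<nu>) \<and> (\<forall>i\<in>{1..k}. q i \<in> \<int> \<and> 0 \<le> q i)"
    then have "divisible_finite_measure \<nu> \<int>"
      using divisible_finite_measure_count_space[of "space \<nu>"] by metis
    with * show thesis
      using that[of \<int>] by blast
  qed
  then interpret divisible_finite_measure \<nu> G
    by simp
  obtain B where "sorted_partition \<nu> f (space \<nu>) k q B"
    using exists_sorted_partition[OF assms(1) sets.top assms(6) q_G assms(10)] by blast
  then show ?thesis
    using sorted_partition_in_partitions_nu_q sorted_partition_SUP_le_INF by blast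
qed

end
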